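(* In a black-white array (BWA) maintained by Insert and Delete operations, consider a demote operation of a segment of rank $i$. Its outcome is one of the following two. (1) If the segment of rank $i-1$ was inactive, the result is a new active segment of rank $i-1$ with occupancy rate $100\%$. (2) If the segment of rank $i-1$ was active, the result, after the merge with the segment of rank $i-1$, is a new segment of rank $i$ with occupancy rate strictly greater than $75\%$.
   Context: A black-white array (BWA) of size $N=2^K$ stores values from a totally ordered set. It has a white array $W[1..N-1]$ and a black array $B[1..N/2-1]$. For $i\ge0$, the segment of rank $i$ is the block of indices $[2^i,2^{i+1}-1]$, of size $2^i$. A state variable $\mathtt{total}$ counts stored entries, including VOID entries. The segment of rank $i$ is active iff bit $i$ of $\mathtt{total}$ is $1$. Between operations, the stored values are in the active white segments, each sorted. Insert$(v)$: if rank 0 is inactive, set $W[1]=v$; otherwise set $B[1]=v$ and perform $\mathrm{merge}(0)$. $\mathrm{merge}(i)$: merge the white and black segments of rank $i$. The sorted result goes into the white rank-$(i+1)$ segment if that segment is inactive. Otherwise it goes into the black rank-$(i+1)$ segment, followed by $\mathrm{merge}(i+1)$. An occupancy vector $V$ records, for each rank $i$, the number $V[i]$ of non-VOID values in the white segment of rank $i$. The occupancy rate of a segment is the number of its non-VOID values divided by its size. Delete$(v)$: search for $v$. If it is found at an index in the white segment of rank $i$, replace that entry by a special value VOID and decrement $V[i]$. If now $V[i]\le 2^{i-1}$ (half the segment size), perform demote$(i)$. Demote$(i)$: copy all non-VOID values of the white rank-$i$ segment into the rank-$(i-1)$ segment. They go to the white array if rank $i-1$ is inactive. If rank $i-1$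 is active, they go to the black array, followed by a merge of the black and white rank-$(i-1)$ segments into the white segment of rank $i$. The state variables are updated accordingly. *)

theory Defs
  imports Main "HOL.Real"
begin

text \<open>Entries of the arrays. A stored value is \<open>Val x\<close>; a deleted value is
  marked VOID but keeps its key (\<open>Void x\<close>) so that segments stay sorted by key.\<close>
datatype 'a entry = Val 'a | Void 'a

fun key :: "'a entry \<Rightarrow> 'a" where
  "key (Val x) = x" | "key (Void x) = x"

fun is_void :: "'a entry \<Rightarrow> bool" where
  "is_void (Val _) = False" | "is_void (Void _) = True"

text \<open>State of a BWA: total, white array W, black array B, occupancy vector V.\<close>
record 'a bwa =
  tot :: nat
  Wa  :: "nat \<Rightarrow> 'a entry"
  Ba  :: "nat \<Rightarrow> 'a entry"
  Vo  :: "nat \<Rightarrow> nat"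

definition seg :: "nat \<Rightarrow> nat set" where
  "seg i = {2^i ..< 2^(Suc i)}"

definition active :: "('a, 'b) bwa_scheme \<Rightarrow> nat \<Rightarrow> bool" where
  "active s i \<longleftrightarrow> odd (tot s div 2^i)"

definition seg_list :: "(nat \<Rightarrow> 'a entry) \<Rightarrow> nat \<Rightarrow> 'a entry list" where
  "seg_list f i = map f [2^i ..< 2^(Suc i)]"

definition write_seg :: "(nat \<Rightarrow> 'a entry) \<Rightarrow> nat \<Rightarrow> 'a entry list \<Rightarrow> nat \<Rightarrow> 'a entry" where
  "write_seg f i xs = (\<lambda>p. if 2^i \<le> p \<and> p < 2^i + length xs then xs ! (p - 2^i) else f p)"

definition merge_lists :: "'a::linorder entry list \<Rightarrow> 'a entry list \<Rightarrow> 'a entry list" where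
  "merge_lists xs ys = sort_key key (xs @ ys)"

definition nvoid :: "'a entry list \<Rightarrow> nat" where
  "nvoid xs = length (filter (\<lambda>e. \<not> is_void e) xs)"

text \<open>merge(i), with a fuel argument bounding the cascade (fuel K suffices for size 2^K).\<close>
primrec merge_op :: "nat \<Rightarrow> nat \<Rightarrow> 'a::linorder bwa \<Rightarrow> 'a bwa" where
  "merge_op 0 i s = s"
| "merge_op (Suc n) i s =
     (let xs = merge_lists (seg_list (Wa s) i) (seg_list (Ba s) i) in
      if \<not> active s (Suc i)
      then s\<lparr>Wa := write_seg (Wa s) (Suc i) xs, Vo := ((Vo s)(i := 0))(Suc i := nvoid xs)\<rparr>
      else merge_op n (Suc i) (s\<lparr>Ba := write_seg (Ba s) (Suc i) xs, Vo := (Vo s)(i := 0)\<rparr>))"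

definition insert_op :: "nat \<Rightarrow> 'a::linorder \<Rightarrow> 'a bwa \<Rightarrow> 'a bwa" where
  "insert_op K v s =
     (if \<not> active s 0
      then s\<lparr>Wa := (Wa s)(1 := Val v), Vo := (Vo s)(0 := 1)\<rparr>
      else merge_op K 0 (s\<lparr>Ba := (Ba s)(1 := Val v)\<rparr>))\<lparr>tot := tot s + 1\<rparr>"

definition void_at :: "'a bwa \<Rightarrow> nat \<Rightarrow> nat \<Rightarrow> 'a bwa" where
  "void_at s p i = s\<lparr>Wa := (Wa s)(p := Void (key (Wa s p))), Vo := (Vo s)(i := Vo s i - 1)\<rparr>"

text \<open>demote(i). For i = 0 there is no rank -1: the (now empty) rank-0 segment is
  simply deactivated.\<close>
definition demote :: "nat \<Rightarrow> 'a::linorder bwa \<Rightarrow> 'a bwa" where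
  "demote i s =
    (if i = 0 then s\<lparr>tot := tot s - 1, Vo := (Vo s)(0 := 0)\<rparr>
     else
      (let ys = filter (\<lambda>e. \<not> is_void e) (seg_list (Wa s) i) in
       if \<not> active s (i - 1)
       then s\<lparr>Wa := write_seg (Wa s) (i - 1) ys,
              Vo := ((Vo s)(i := 0))(i - 1 := length ys),
              tot := tot s - 2^i + 2^(i - 1)\<rparr>
       else
         (let B' = write_seg (Ba s) (i - 1) ys;
              xs = merge_lists (seg_list (Wa s) (i - 1)) (seg_list B' (i - 1)) in
          s\<lparr>Ba := B', Wa := write_seg (Wa s) i xs,
            Vo := ((Vo s)(i - 1 := 0))(i := nvoid xs),
            tot := tot s - 2^(i - 1)\<rparr>)))"

text \<open>Delete(v): if v is found at index p of an active white segment of rank i,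
  void it and demote if V[i] \<le> 2^(i-1) (written 2 V[i] \<le> 2^i); otherwise no change.\<close>
definition delete_at :: "'a::linorder bwa \<Rightarrow> nat \<Rightarrow> nat \<Rightarrow> 'a bwa" where
  "delete_at s p i = (let s1 = void_at s p i in
                        if 2 * Vo s1 i \<le> 2^i then demote i s1 else s1)"

definition delete_step :: "nat \<Rightarrow> 'a::linorder bwa \<Rightarrow> 'a \<Rightarrow> 'a bwa \<Rightarrow> bool" where
  "delete_step K s v s' \<longleftrightarrow>
     (\<exists>i p. i < K \<and> active s i \<and> p \<in> seg i \<and> Wa s p = Val v \<and> s' = delete_at s p i)
   \<or> ((\<nexists>i p. i < K \<and> active s i \<and> p \<in> seg i \<and> Wa s p = Val v) \<and> s' = s)"

inductive reachable :: "nat \<Rightarrow> 'a::linorder bwa \<Rightarrow> bool" for K where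
  init: "reachable K \<lparr>tot = 0, Wa = W, Ba = B, Vo = (\<lambda>_. 0)\<rparr>"
| ins:  "reachable K s \<Longrightarrow> tot s + 1 < 2^K \<Longrightarrow> reachable K (insert_op K v s)"
| del:  "reachable K s \<Longrightarrow> delete_step K s v s' \<Longrightarrow> reachable K s'"

definition occ_rate :: "'a bwa \<Rightarrow> nat \<Rightarrow> real" where
  "occ_rate s i = real (card {p \<in> seg i. \<not> is_void (Wa s p)}) / 2^i"

end

theory Submission
  imports Defs
begin

(* Every active segment of a reachable BWA is more than half occupied, and V records its
   occupancy: Insert only merges more-than-half-full segments into larger ones, and Delete
   can break the property only in the segment it then demotes. The deletion that triggers
   demote(i) therefore leaves exactly 2^(i-1) values in the rank-i segment. Copied into an
   inactive rank i-1 they fill it completely; merged with an active rank-(i-1) segment, which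
   holds more than 2^(i-2) values, they give more than 2^(i-1) + 2^(i-2) = (3/4) 2^i values. *)

lemma exp_le_if_bit_nat: "bit t i \<Longrightarrow> 2^i \<le> t" for t :: nat
  by (metis bit_iff_odd div_less even_zero not_le)

lemma bit_add_exp_nat:
  fixes t :: nat
  assumes "\<not> bit t i"
  shows "bit (t + 2^i) k \<longleftrightarrow> k = i \<or> bit t k"
proof -
  have "t + 2^i = set_bit i t" using assms by (simp add: set_bit_eq)
  then show ?thesis by (auto simp: bit_set_bit_iff)
qed

lemma bit_diff_exp_nat:
  fixes t :: nat
  assumes "bit t i"
  shows "bit (t - 2^i) k \<longleftrightarrow> k \<noteq> i \<and> bit t k"
proof -
  \<comment> \<open>\<open>unset_bit_eq\<close> is stated for rings, hence the detour through \<open>int\<close>\<close>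
  have "int (unset_bit i t) = int (t - 2^i)"
    using assms exp_le_if_bit_nat[OF assms]
    by (simp add: of_nat_unset_bit_eq unset_bit_eq bit_of_nat_iff_bit of_nat_diff)
  then have "t - 2^i = unset_bit i t" by simp
  then show ?thesis by (auto simp: bit_unset_bit_iff)
qed

lemma bit_add_one_carry_nat:
  fixes t :: nat
  assumes "\<forall>k<j. bit t k" "\<not> bit t j"
  shows "bit (t + 1) k \<longleftrightarrow> k = j \<or> (j < k \<and> bit t k)"
  using assms
proof (induction j arbitrary: t k)
  case 0
  then show ?case by (cases k) (auto simp: bit_0 bit_Suc)
next
  case (Suc j)
  have "odd t" using Suc.prems(1) by (auto simp flip: bit_0)
  then have "(t + 1) div 2 = t div 2 + 1" by presburger
  moreover have "\<forall>k<j. bit (t div 2) k" "\<not> bit (t div 2) j"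
    using Suc.prems by (auto simp flip: bit_Suc)
  ultimately show ?case
    using Suc.IH[of "t div 2"] \<open>odd t\<close> by (cases k) (auto simp: bit_0 bit_Suc)
qed

lemma active_iff_bit: "active s k \<longleftrightarrow> bit (tot s) k"
  by (simp add: active_def bit_iff_odd)

lemma length_seg_list [simp]: "length (seg_list f i) = 2^i"
  by (simp add: seg_list_def)

lemma seg_list_write_seg_same:
  assumes "length xs = 2^i"
  shows "seg_list (write_seg f i xs) i = xs"
  by (rule nth_equalityI) (auto simp: seg_list_def write_seg_def assms)

lemma seg_disjoint:
  assumes "k \<noteq> i"
  shows "seg k \<inter> seg i = {}"
proof -
  have "(2::nat)^Suc k \<le> 2^i" if "k < i" for k i :: nat
    using that by (intro power_increasing) auto
  then show ?thesis using assms by (fastforce simp: seg_def dest: nat_neq_iff[THEN iffD1])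
qed

lemma seg_list_cong:
  assumes "\<And>q. q \<in> seg k \<Longrightarrow> f q = g q"
  shows "seg_list f k = seg_list g k"
  using assms by (auto simp: seg_list_def seg_def)

lemma seg_list_write_seg_other:
  assumes "k \<noteq> i" "length xs \<le> 2^i"
  shows "seg_list (write_seg f i xs) k = seg_list f k"
proof (rule seg_list_cong)
  fix q assume "q \<in> seg k"
  then have "q \<notin> seg i" using seg_disjoint[OF assms(1)] by blast
  then show "write_seg f i xs q = f q" using assms(2) by (auto simp: write_seg_def seg_def)
qed

lemma seg_list_fun_upd_other:
  assumes "p \<in> seg i" "k \<noteq> i"
  shows "seg_list (f(p := x)) k = seg_list f k"
  using seg_disjoint[OF assms(2)] assms(1) by (intro seg_list_cong) auto

lemma nvoid_seg_list: "nvoid (seg_list f i) = card {q \<in> seg i. \<not> is_void (f q)}"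
proof -
  have "nvoid (seg_list f i) = length (filter (\<lambda>q. \<not> is_void (f q)) [2^i..<2^Suc i])"
    by (simp add: nvoid_def seg_list_def filter_map comp_def)
  also have "\<dots> = card ({q. \<not> is_void (f q)} \<inter> set [2^i..<2^Suc i])"
    by (rule distinct_length_filter) simp
  also have "\<dots> = card {q \<in> seg i. \<not> is_void (f q)}"
    by (rule arg_cong[where f = card]) (auto simp: seg_def)
  finally show ?thesis .
qed

lemma occ_rate_eq_nvoid: "occ_rate s i = nvoid (seg_list (Wa s) i) / 2^i"
  by (simp add: occ_rate_def nvoid_seg_list)

lemma nvoid_seg_list_void:
  assumes "p \<in> seg i" "f p = Val v"
  shows "nvoid (seg_list (f(p := Void w)) i) = nvoid (seg_list f i) - 1"
proof -
  define A where "A = {q \<in> seg i. \<not> is_void (f q)}"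
  have "p \<in> A" using assms by (simp add: A_def)
  moreover have "{q \<in> seg i. \<not> is_void ((f(p := Void w)) q)} = A - {p}"
    by (auto simp: A_def)
  ultimately show ?thesis by (simp add: nvoid_seg_list A_def)
qed

lemma nvoid_merge_lists: "nvoid (merge_lists xs ys) = nvoid xs + nvoid ys"
  by (simp add: merge_lists_def nvoid_def filter_sort)

lemma length_merge_lists [simp]: "length (merge_lists xs ys) = length xs + length ys"
  by (simp add: merge_lists_def)

definition seg_view :: "'a bwa \<Rightarrow> nat \<Rightarrow> nat \<times> 'a entry list" where
  "seg_view s k = (Vo s k, seg_list (Wa s) k)"

definition well_occupied :: "'a bwa \<Rightarrow> nat \<Rightarrow> bool" where
  "well_occupied s k \<longleftrightarrow> Vo s k = nvoid (seg_list (Wa s) k) \<and> 2^k < 2 * Vo s k"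

definition bwa_invar :: "nat \<Rightarrow> 'a bwa \<Rightarrow> bool" where
  "bwa_invar K s \<longleftrightarrow> tot s < 2^K \<and> (\<forall>k. active s k \<longrightarrow> well_occupied s k)"

lemma well_occupied_cong:
  "seg_view s' k = seg_view s k \<Longrightarrow> well_occupied s' k = well_occupied s k"
  by (simp add: seg_view_def well_occupied_def)

lemma bwa_invar_transfer:
  assumes "bwa_invar K s" "tot s' < 2^K"
    and "\<And>k. active s' k \<Longrightarrow> well_occupied s' k \<or> (active s k \<and> seg_view s' k = seg_view s k)"
  shows "bwa_invar K s'"
  using assms well_occupied_cong by (metis bwa_invar_def)

lemma merge_op_cascade:
  fixes s :: "'a::linorder bwa"
  assumes "i < j" "j \<le> i + n"
    and "\<forall>k. i \<le> k \<and> k < j \<longrightarrow> active s k \<and> well_occupied s k" "\<not> active s j"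
    and "2^i < 2 * nvoid (seg_list (Ba s) i)"
  shows "well_occupied (merge_op n i s) j \<and> (\<forall>k>j. seg_view (merge_op n i s) k = seg_view s k)"
  using assms
proof (induction n arbitrary: i s)
  case 0
  then show ?case by simp
next
  case (Suc n)
  define xs where "xs = merge_lists (seg_list (Wa s) i) (seg_list (Ba s) i)"
  have length_xs: "length xs = 2^Suc i" by (simp add: xs_def)
  have "well_occupied s i" using Suc.prems by simp
  then have more_than_half: "2^Suc i < 2 * nvoid xs"
    using Suc.prems(5) by (simp add: xs_def nvoid_merge_lists well_occupied_def)
  show ?case
  proof (cases "j = Suc i")
    case True
    then have "merge_op (Suc n) i s
        = s\<lparr>Wa := write_seg (Wa s) (Suc i) xs, Vo := ((Vo s)(i := 0))(Suc i := nvoid xs)\<rparr>"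
      using Suc.prems(4) by (simp add: xs_def Let_def)
    then show ?thesis
      using True length_xs more_than_half
      by (simp add: well_occupied_def seg_view_def seg_list_write_seg_same seg_list_write_seg_other)
  next
    case False
    define s' where "s' = s\<lparr>Ba := write_seg (Ba s) (Suc i) xs, Vo := (Vo s)(i := 0)\<rparr>"
    have "active s (Suc i)" using Suc.prems(1,3) False by simp
    then have "merge_op (Suc n) i s = merge_op n (Suc i) s'"
      by (simp add: xs_def s'_def Let_def)
    moreover have "\<forall>k. Suc i \<le> k \<and> k < j \<longrightarrow> active s' k \<and> well_occupied s' k"
      using Suc.prems(3) well_occupied_cong[of s' _ s]
      by (simp add: s'_def active_def seg_view_def)
    moreover have "2^Suc i < 2 * nvoid (seg_list (Ba s') (Suc i))"
      using more_than_half length_xs by (simp add: s'_def seg_list_write_seg_same)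
    moreover have "\<not> active s' j" "\<forall>k>j. seg_view s' k = seg_view s k"
      using Suc.prems(1,4) by (simp_all add: s'_def active_def seg_view_def)
    ultimately show ?thesis
      using Suc.IH[of "Suc i" s'] Suc.prems(1,2) False by auto
  qed
qed

lemma first_inactive_rank:
  assumes "bwa_invar K s"
  obtains j where "\<not> active s j" "j \<le> K" "\<forall>k<j. active s k"
proof -
  have "\<not> active s K" using assms by (simp add: bwa_invar_def active_def)
  then show ?thesis
    using that wellorder_Least_lemma[of "\<lambda>j. \<not> active s j" K] not_less_Least by blast
qed

lemma insert_op_invar_free_rank0:
  fixes s :: "'a::linorder bwa"
  assumes invar: "bwa_invar K s" and room: "tot s + 1 < 2^K" and "\<not> active s 0"
  shows "bwa_invar K (insert_op K v s)"
proof -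
  let ?s' = "insert_op K v s"
  have s': "?s' = s\<lparr>Wa := (Wa s)(1 := Val v), Vo := (Vo s)(0 := 1), tot := tot s + 1\<rparr>"
    using \<open>\<not> active s 0\<close> by (simp add: insert_op_def)
  show ?thesis
  proof (rule bwa_invar_transfer[OF invar])
    show "tot ?s' < 2^K" using room by (simp add: s')
    fix k assume "active ?s' k"
    then have "k = 0 \<or> active s k"
      using \<open>\<not> active s 0\<close> bit_add_exp_nat[of "tot s" 0 k] by (simp add: s' active_iff_bit)
    show "well_occupied ?s' k \<or> (active s k \<and> seg_view ?s' k = seg_view s k)"
    proof (cases "k = 0")
      case True
      have "seg_list (Wa ?s') 0 = [Val v]" by (simp add: s' seg_list_def numeral_2_eq_2)
      then show ?thesis using True by (simp add: s' well_occupied_def nvoid_def)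
    next
      case False
      have "(1::nat) \<in> seg 0" by (simp add: seg_def)
      then show ?thesis
        using False \<open>k = 0 \<or> active s k\<close> seg_list_fun_upd_other[OF _ False, of 1 "Wa s"]
        by (simp add: s' seg_view_def)
    qed
  qed
qed

lemma insert_op_invar_cascade:
  fixes s :: "'a::linorder bwa"
  assumes invar: "bwa_invar K s" and room: "tot s + 1 < 2^K" and "active s 0"
  shows "bwa_invar K (insert_op K v s)"
proof -
  obtain j where j: "\<not> active s j" "j \<le> K" "\<forall>k<j. active s k"
    using first_inactive_rank[OF invar] .
  have "0 < j" using \<open>active s 0\<close> j(1) by (cases j) auto
  define s0 where "s0 = s\<lparr>Ba := (Ba s)(1 := Val v)\<rparr>"
  have s0: "\<And>k. active s0 k = active s k" "\<And>k. seg_view s0 k = seg_view s k"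
    by (simp_all add: s0_def active_def seg_view_def)
  have "seg_list (Ba s0) 0 = [Val v]" by (simp add: s0_def seg_list_def numeral_2_eq_2)
  then have "2^0 < 2 * nvoid (seg_list (Ba s0) 0)" by (simp add: nvoid_def)
  moreover have "\<forall>k. 0 \<le> k \<and> k < j \<longrightarrow> active s0 k \<and> well_occupied s0 k"
    using j(3) invar s0 well_occupied_cong by (metis bwa_invar_def)
  ultimately have merged: "well_occupied (merge_op K 0 s0) j"
      "\<forall>k>j. seg_view (merge_op K 0 s0) k = seg_view s k"
    using merge_op_cascade[of 0 j K s0] \<open>0 < j\<close> j(1,2) s0 by simp_all
  have s': "insert_op K v s = (merge_op K 0 s0)\<lparr>tot := tot s + 1\<rparr>"
    using \<open>active s 0\<close> by (simp add: insert_op_def s0_def)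
  have "\<forall>k<j. bit (tot s) k" "\<not> bit (tot s) j" using j by (simp_all add: active_iff_bit)
  then have active': "active (insert_op K v s) k \<longleftrightarrow> k = j \<or> (j < k \<and> active s k)" for k
    using bit_add_one_carry_nat[of j "tot s" k] by (simp add: s' active_iff_bit)
  show ?thesis
  proof (rule bwa_invar_transfer[OF invar])
    show "tot (insert_op K v s) < 2^K" using room by (simp add: s')
    fix k assume "active (insert_op K v s) k"
    then consider "k = j" | "j < k" "active s k" using active' by blast
    then show "well_occupied (insert_op K v s) k
        \<or> (active s k \<and> seg_view (insert_op K v s) k = seg_view s k)"
    proof cases
      case 1
      then show ?thesis using merged(1) by (simp add: s' well_occupied_def)
    next
      case 2
      then show ?thesis using merged(2) by (simp add: s' seg_view_def)
    qed
  qed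
qed

lemma insert_op_invar:
  fixes s :: "'a::linorder bwa"
  assumes "bwa_invar K s" "tot s + 1 < 2^K"
  shows "bwa_invar K (insert_op K v s)"
  using assms insert_op_invar_free_rank0 insert_op_invar_cascade by blast

lemma tot_void_at [simp]: "tot (void_at s p i) = tot s"
  by (simp add: void_at_def)

lemma active_void_at [simp]: "active (void_at s p i) k = active s k"
  by (simp add: active_def)

lemma seg_view_void_at_other:
  "p \<in> seg i \<Longrightarrow> k \<noteq> i \<Longrightarrow> seg_view (void_at s p i) k = seg_view s k"
  by (simp add: void_at_def seg_view_def seg_list_fun_upd_other)

lemma Vo_void_at:
  assumes "p \<in> seg i" "Wa s p = Val v" "well_occupied s i"
  shows "Vo (void_at s p i) i = nvoid (seg_list (Wa (void_at s p i)) i)"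
    and "Vo (void_at s p i) i + 1 = Vo s i"
  using assms nvoid_seg_list_void[of p i "Wa s" v "key (Wa s p)"]
  by (auto simp: void_at_def well_occupied_def)

lemma well_occupied_void_at_other:
  assumes "bwa_invar K s" "p \<in> seg i" "active s k" "k \<noteq> i"
  shows "well_occupied (void_at s p i) k"
  using well_occupied_cong[OF seg_view_void_at_other[OF assms(2,4), of s]] assms(1,3)
  by (simp add: bwa_invar_def)

lemma nvoid_void_at_demoted:
  assumes "bwa_invar K s" "active s (Suc m)" "p \<in> seg (Suc m)" "Wa s p = Val v"
    and "2 * Vo (void_at s p (Suc m)) (Suc m) \<le> 2^Suc m"
  shows "nvoid (seg_list (Wa (void_at s p (Suc m))) (Suc m)) = 2^m"
proof -
  have "well_occupied s (Suc m)" using assms(1,2) by (simp add: bwa_invar_def)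
  then show ?thesis using Vo_void_at[OF assms(3,4)] assms(5) by (simp add: well_occupied_def)
qed

lemma demote_into_inactive:
  fixes s :: "'a::linorder bwa"
  assumes "active s (Suc m)" "\<not> active s m"
    and half: "nvoid (seg_list (Wa s) (Suc m)) = 2^m"
  defines "d \<equiv> demote (Suc m) s"
  shows "active d k \<longleftrightarrow> k = m \<or> (k \<noteq> Suc m \<and> active s k)"
    and "well_occupied d m" and "occ_rate d m = 1"
    and "k \<noteq> m \<Longrightarrow> k \<noteq> Suc m \<Longrightarrow> seg_view d k = seg_view s k"
    and "tot d \<le> tot s"
proof -
  define ys where "ys = filter (\<lambda>e. \<not> is_void e) (seg_list (Wa s) (Suc m))"
  have ys: "length ys = 2^m" "nvoid ys = 2^m" using half by (simp_all add: ys_def nvoid_def)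
  have d: "d = s\<lparr>Wa := write_seg (Wa s) m ys, Vo := ((Vo s)(Suc m := 0))(m := length ys),
                  tot := tot s - 2^Suc m + 2^m\<rparr>"
    using assms(2) by (simp add: d_def demote_def ys_def Let_def)
  have bits: "bit (tot s) (Suc m)" "\<not> bit (tot s) m" using assms(1,2) by (simp_all add: active_iff_bit)
  then have "\<not> bit (tot s - 2^Suc m) m" using bit_diff_exp_nat by blast
  then show "active d k \<longleftrightarrow> k = m \<or> (k \<noteq> Suc m \<and> active s k)"
    using bit_add_exp_nat[of _ m k] bit_diff_exp_nat[OF bits(1), of k]
    by (auto simp: d active_iff_bit)
  have "seg_list (Wa d) m = ys" using ys by (simp add: d seg_list_write_seg_same)
  then show "well_occupied d m" "occ_rate d m = 1"
    using ys by (simp_all add: d well_occupied_def occ_rate_eq_nvoid)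
  show "seg_view d k = seg_view s k" if "k \<noteq> m" "k \<noteq> Suc m"
    using that ys by (simp add: d seg_view_def seg_list_write_seg_other)
  show "tot d \<le> tot s" using exp_le_if_bit_nat[OF bits(1)] by (simp add: d)
qed

lemma demote_merge_active:
  fixes s :: "'a::linorder bwa"
  assumes "active s m" "well_occupied s m"
    and half: "nvoid (seg_list (Wa s) (Suc m)) = 2^m"
  defines "d \<equiv> demote (Suc m) s"
  shows "active d k \<longleftrightarrow> k \<noteq> m \<and> active s k"
    and "well_occupied d (Suc m)" and "3/4 < occ_rate d (Suc m)"
    and "k \<noteq> m \<Longrightarrow> k \<noteq> Suc m \<Longrightarrow> seg_view d k = seg_view s k"
    and "tot d \<le> tot s"
proof -
  define ys where "ys = filter (\<lambda>e. \<not> is_void e) (seg_list (Wa s) (Suc m))"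
  have ys: "length ys = 2^m" "nvoid ys = 2^m" using half by (simp_all add: ys_def nvoid_def)
  define B where "B = write_seg (Ba s) m ys"
  define xs where "xs = merge_lists (seg_list (Wa s) m) (seg_list B m)"
  have d: "d = s\<lparr>Ba := B, Wa := write_seg (Wa s) (Suc m) xs,
                  Vo := ((Vo s)(m := 0))(Suc m := nvoid xs), tot := tot s - 2^m\<rparr>"
    using assms(1) by (simp add: d_def demote_def ys_def B_def xs_def Let_def)
  have "seg_list B m = ys" using ys by (simp add: B_def seg_list_write_seg_same)
  then have xs: "length xs = 2^Suc m" "nvoid xs = Vo s m + 2^m"
    using ys assms(2) by (simp_all add: xs_def nvoid_merge_lists well_occupied_def)
  then have seg: "seg_list (Wa d) (Suc m) = xs" by (simp add: d seg_list_write_seg_same)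
  have "3 * 2^Suc m < 4 * nvoid xs" using xs(2) assms(2) by (simp add: well_occupied_def)
  then show "well_occupied d (Suc m)" using seg by (simp add: d well_occupied_def)
  have "real (3 * 2^Suc m) < real (4 * nvoid xs)"
    using \<open>3 * 2^Suc m < 4 * nvoid xs\<close> by (simp only: of_nat_less_iff)
  then show "3/4 < occ_rate d (Suc m)" by (simp add: seg occ_rate_eq_nvoid field_simps)
  show "active d k \<longleftrightarrow> k \<noteq> m \<and> active s k"
    using assms(1) by (simp add: d active_iff_bit bit_diff_exp_nat)
  show "seg_view d k = seg_view s k" if "k \<noteq> m" "k \<noteq> Suc m"
    using that xs(1) by (simp add: d seg_view_def seg_list_write_seg_other)
  show "tot d \<le> tot s" by (simp add: d)
qed

lemma demote_zero_invar:
  fixes s :: "'a::linorder bwa"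
  assumes invar: "bwa_invar K s" and "active s 0" "p \<in> seg 0"
  shows "bwa_invar K (demote 0 (void_at s p 0))"
proof -
  let ?d = "demote 0 (void_at s p 0)"
  have d: "?d = (void_at s p 0)\<lparr>tot := tot s - 2^0, Vo := (Vo (void_at s p 0))(0 := 0)\<rparr>"
    by (simp add: demote_def)
  have "bit (tot s) 0" using assms(2) by (simp add: active_iff_bit)
  from bit_diff_exp_nat[OF this] have active': "active ?d k \<longleftrightarrow> k \<noteq> 0 \<and> active s k" for k
    by (simp add: d active_iff_bit)
  show ?thesis
  proof (rule bwa_invar_transfer[OF invar])
    show "tot ?d < 2^K" using invar by (auto simp: d bwa_invar_def)
    fix k assume "active ?d k"
    then have "k \<noteq> 0" "active s k" using active' by simp_all
    then show "well_occupied ?d k \<or> (active s k \<and> seg_view ?d k = seg_view s k)"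
      using seg_view_void_at_other[OF assms(3) \<open>k \<noteq> 0\<close>, of s] by (simp add: d seg_view_def)
  qed
qed

lemma demote_invar:
  fixes s :: "'a::linorder bwa"
  assumes invar: "bwa_invar K s" and "active s (Suc m)" "p \<in> seg (Suc m)" "Wa s p = Val v"
    and "2 * Vo (void_at s p (Suc m)) (Suc m) \<le> 2^Suc m"
  shows "bwa_invar K (demote (Suc m) (void_at s p (Suc m)))"
proof -
  let ?s1 = "void_at s p (Suc m)"
  let ?d = "demote (Suc m) ?s1"
  have tot: "tot ?s1 < 2^K" using invar by (simp add: bwa_invar_def)
  have others: "\<And>k. k \<noteq> Suc m \<Longrightarrow> seg_view ?s1 k = seg_view s k"
    using seg_view_void_at_other[OF assms(3)] .
  have half: "nvoid (seg_list (Wa ?s1) (Suc m)) = 2^m"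
    using nvoid_void_at_demoted[OF assms] .
  have "active ?s1 (Suc m)" using assms(2) by simp
  show ?thesis
  proof (cases "active ?s1 m")
    case False
    note d = demote_into_inactive[OF \<open>active ?s1 (Suc m)\<close> False half]
    show ?thesis
    proof (rule bwa_invar_transfer[OF invar])
      show "tot ?d < 2^K" using d(5) tot by simp
      fix k assume "active ?d k"
      then consider "k = m" | "k \<noteq> m" "k \<noteq> Suc m" "active s k" using d(1) by auto
      then show "well_occupied ?d k \<or> (active s k \<and> seg_view ?d k = seg_view s k)"
        by cases (simp_all add: d(2,4) others)
    qed
  next
    case True
    have "well_occupied ?s1 m" using well_occupied_void_at_other[OF invar assms(3)] True by simp
    note d = demote_merge_active[OF True this half]
    show ?thesis
    proof (rule bwa_invar_transfer[OF invar])
      show "tot ?d < 2^K" using d(5) tot by simp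
      fix k assume "active ?d k"
      then consider "k = Suc m" | "k \<noteq> m" "k \<noteq> Suc m" "active s k" using d(1) by auto
      then show "well_occupied ?d k \<or> (active s k \<and> seg_view ?d k = seg_view s k)"
        by cases (simp_all add: d(2,4) others)
    qed
  qed
qed

lemma delete_step_invar:
  fixes s :: "'a::linorder bwa"
  assumes invar: "bwa_invar K s" and "delete_step K s v s'"
  shows "bwa_invar K s'"
proof -
  consider (found) i p where "active s i" "p \<in> seg i" "Wa s p = Val v" "s' = delete_at s p i"
    | (absent) "s' = s"
    using assms(2) by (auto simp: delete_step_def)
  then show ?thesis
  proof cases
    case found
    show ?thesis
    proof (cases "2 * Vo (void_at s p i) i \<le> 2^i")
      case True
      have "bwa_invar K (demote i (void_at s p i))"
      proof (cases i)
        case 0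
        then show ?thesis using demote_zero_invar[OF invar] found(1,2) by simp
      next
        case (Suc m)
        then show ?thesis using demote_invar[OF invar] found(1-3) True by simp
      qed
      then show ?thesis using True found(4) by (simp add: delete_at_def)
    next
      case False
      have s': "s' = void_at s p i" using found(4) False by (simp add: delete_at_def)
      have "well_occupied s i" using invar found(1) by (simp add: bwa_invar_def)
      then have "well_occupied s' i"
        using Vo_void_at[OF found(2,3)] False by (simp add: s' well_occupied_def)
      then have "well_occupied s' k" if "active s' k" for k
        using well_occupied_void_at_other[OF invar found(2)] that by (cases "k = i") (simp_all add: s')
      then show ?thesis using invar by (simp add: s' bwa_invar_def)
    qed
  qed (use invar in simp)
qed

lemma reachable_invar: "reachable K s \<Longrightarrow> bwa_invar K s"
proof (induction rule: reachable.induct)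
  case (init W B)
  then show ?case by (simp add: bwa_invar_def active_def)
next
  case (ins s v)
  then show ?case using insert_op_invar by blast
next
  case (del s v s')
  then show ?case using delete_step_invar by blast
qed

theorem mainTheorem3:
  fixes K i p :: nat and v :: "'a::linorder" and s :: "'a bwa"
  assumes "reachable K s"
    and "i < K" and "active s i" and "p \<in> seg i" and "Wa s p = Val v"
    and "1 \<le> i"
    and "2 * Vo (void_at s p i) i \<le> 2^i"
  shows "(\<not> active (void_at s p i) (i - 1) \<longrightarrow>
            active (demote i (void_at s p i)) (i - 1) \<and>
            occ_rate (demote i (void_at s p i)) (i - 1) = 1)
       \<and> (active (void_at s p i) (i - 1) \<longrightarrow>
            active (demote i (void_at s p i)) i \<and>
            occ_rate (demote i (void_at s p i)) i > 3 / 4)"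
proof -
  obtain m where i: "i = Suc m" using \<open>1 \<le> i\<close> by (cases i) auto
  let ?s1 = "void_at s p i"
  have invar: "bwa_invar K s" using \<open>reachable K s\<close> by (rule reachable_invar)
  have half: "nvoid (seg_list (Wa ?s1) (Suc m)) = 2^m"
    using nvoid_void_at_demoted[OF invar assms(3-5)[unfolded i] assms(7)[unfolded i]] i by simp
  have "active ?s1 (Suc m)" using \<open>active s i\<close> i by simp
  have "active (demote i ?s1) m \<and> occ_rate (demote i ?s1) m = 1" if "\<not> active ?s1 m"
    using demote_into_inactive[OF \<open>active ?s1 (Suc m)\<close> that half] i by simp
  moreover have "active (demote i ?s1) i \<and> occ_rate (demote i ?s1) i > 3/4" if "active ?s1 m"
  proof -
    have "well_occupied ?s1 m" using well_occupied_void_at_other[OF invar assms(4)] that i by simp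
    then show ?thesis
      using demote_merge_active[OF that _ half] \<open>active ?s1 (Suc m)\<close> i by simp
  qed
  ultimately show ?thesis using i by simp
qed

end
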